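(* Let $H=(X\cup Y,E_H)$ be a $3$-regular bipartite graph with $|X|=|Y|=n$, let $\mathrm{order}:Y\to\{1,\dots,n\}$ be a bijection, and let $G$ be the instance of the rank-maximal matchings problem constructed as follows. Applicants: $a_x$ for $x\in X$, and dummy applicants $ad_1,\dots,ad_{n-3}$. Posts: $p_y$ for $y\in Y$, and dummy posts $pd_1,\dots,pd_{n-3}$. Applicant $ad_i$ has the single post $pd_i$ at rank $1$. For $x\in X$ with neighbours $y_1,y_2,y_3$ in $H$, applicant $a_x$ ranks $p_{y_j}$ at rank $\mathrm{order}(y_j)$ ($j=1,2,3$), and the remaining $n-3$ ranks in $\{1,\dots,n\}$ of $a_x$'s list are filled by the $n-3$ dummy posts, one per rank. Then there is a one-to-one correspondence between perfect matchings of $H$ and rank-maximal matchings of $G$: the map $M\mapsto\{(a_x,p_y):(x,y)\in M\}\cup\{(ad_i,pd_i):1\le i\le n-3\}$ is a bijection from the set of perfect matchings of $H$ onto the set of rank-maximal matchings of $G$.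
   Context: An instance of the rank-maximal matchings problem is a bipartite graph between applicants and posts in which each edge $(a,p)$ carries a rank $i$, meaning $p$ is an $i$-th choice of $a$. The signature of a matching is $(x_1,\dots,x_r)$, $x_i$ the number of applicants matched along rank-$i$ edges ($r$ the maximum rank); a matching is rank-maximal if its signature is lexicographically maximum among all matchings of the instance. *)

theory Defs
  imports Main
begin

definition is_matching :: "('a \<times> 'p) set \<Rightarrow> ('a \<times> 'p) set \<Rightarrow> bool" where
  "is_matching E M \<longleftrightarrow> M \<subseteq> E \<and>
     (\<forall>a p p'. (a,p) \<in> M \<and> (a,p') \<in> M \<longrightarrow> p = p') \<and>
     (\<forall>a a' p. (a,p) \<in> M \<and> (a',p) \<in> M \<longrightarrow> a = a')"

definition signature :: "('a \<times> 'p \<Rightarrow> nat) \<Rightarrow> ('a \<times> 'p) set \<Rightarrow> nat \<Rightarrow> nat" where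
  "signature rk M i = card {e \<in> M. rk e = i}"

text \<open>Lexicographic comparison of signatures (ranks start at 1).\<close>
definition lex_greater :: "(nat \<Rightarrow> nat) \<Rightarrow> (nat \<Rightarrow> nat) \<Rightarrow> bool" where
  "lex_greater s t \<longleftrightarrow> (\<exists>i\<ge>1. (\<forall>j. 1 \<le> j \<and> j < i \<longrightarrow> s j = t j) \<and> s i > t i)"

definition rank_maximal :: "('a \<times> 'p) set \<Rightarrow> ('a \<times> 'p \<Rightarrow> nat) \<Rightarrow> ('a \<times> 'p) set \<Rightarrow> bool" where
  "rank_maximal E rk M \<longleftrightarrow> is_matching E M \<and>
     \<not> (\<exists>M'. is_matching E M' \<and> lex_greater (signature rk M') (signature rk M))"

definition perfect_matching :: "'x set \<Rightarrow> 'y set \<Rightarrow> ('x \<times> 'y) set \<Rightarrow> ('x \<times> 'y) set \<Rightarrow> bool" where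
  "perfect_matching X Y EH M \<longleftrightarrow> is_matching EH M \<and>
     (\<forall>x\<in>X. \<exists>y. (x,y) \<in> M) \<and> (\<forall>y\<in>Y. \<exists>x. (x,y) \<in> M)"

definition nbrs :: "('x \<times> 'y) set \<Rightarrow> 'x \<Rightarrow> 'y set" where
  "nbrs EH x = {y. (x,y) \<in> EH}"

text \<open>Applicants: Inl x is a_x, Inr i is ad_i. Posts: Inl y is p_y, Inr i is pd_i
  (dummy indices i in 1..n-3).\<close>

definition G_edges :: "nat \<Rightarrow> 'x set \<Rightarrow> ('x \<times> 'y) set \<Rightarrow> (('x + nat) \<times> ('y + nat)) set" where
  "G_edges n X EH =
     {(Inl x, Inl y) | x y. (x,y) \<in> EH} \<union>
     {(Inl x, Inr i) | x i. x \<in> X \<and> 1 \<le> i \<and> i \<le> n - 3} \<union>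
     {(Inr i, Inr i) | i. 1 \<le> i \<and> i \<le> n - 3}"

text \<open>dr x i is the rank at which applicant a_x lists dummy post pd_i.\<close>
fun G_rank :: "('y \<Rightarrow> nat) \<Rightarrow> ('x \<Rightarrow> nat \<Rightarrow> nat) \<Rightarrow> ('x + nat) \<times> ('y + nat) \<Rightarrow> nat" where
  "G_rank order dr (Inl x, Inl y) = order y"
| "G_rank order dr (Inl x, Inr i) = dr x i"
| "G_rank order dr (Inr i, Inr j) = 1"
| "G_rank order dr (Inr i, Inl y) = 0"

definition embed :: "nat \<Rightarrow> ('x \<times> 'y) set \<Rightarrow> (('x + nat) \<times> ('y + nat)) set" where
  "embed n M = {(Inl x, Inl y) | x y. (x,y) \<in> M} \<union> {(Inr i, Inr i) | i. 1 \<le> i \<and> i \<le> n - 3}"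

end

theory Submission
  imports Defs
begin

text \<open>
  In every matching of G at most n - 2 edges have rank 1: they end in the n - 3 dummy posts or
  in the unique post of order 1. If all these posts are used at rank 1, then an edge of rank
  k \<ge> 2 cannot end in a dummy post, so it ends in the unique post of order k, and there is at
  most one such edge. The image of a perfect matching of H attains all these bounds, so its
  signature (n - 2, 1, ..., 1) is lexicographically maximum; a perfect matching exists because
  H is regular (Hall's theorem, by double counting). Conversely a rank-maximal matching has this
  signature, hence 2n - 3 edges, so it saturates every applicant and every post. Then each dummy
  applicant holds its dummy post, no applicant a_x can use a dummy post, and the remaining edges
  form a perfect matching of H.
\<close>

lemma matching_inj_on_fst: "is_matching E M \<Longrightarrow> inj_on fst M"
  unfolding is_matching_def inj_on_def by (metis prod.collapse)

lemma matching_inj_on_snd: "is_matching E M \<Longrightarrow> inj_on snd M"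
  unfolding is_matching_def inj_on_def by (metis prod.collapse)

lemma matching_covers_fst:
  assumes "is_matching E M" "M \<subseteq> A \<times> B" "finite A" "card M = card A"
  shows "fst ` M = A"
  using assms matching_inj_on_fst[OF assms(1)]
  by (intro card_subset_eq) (force simp: card_image)+

lemma matching_covers_snd:
  assumes "is_matching E M" "M \<subseteq> A \<times> B" "finite B" "card M = card B"
  shows "snd ` M = B"
  using assms matching_inj_on_snd[OF assms(1)]
  by (intro card_subset_eq) (force simp: card_image)+

lemma card_eq_sum_signature:
  assumes "finite M" "rk ` M \<subseteq> {1..n}"
  shows "card M = (\<Sum>k=1..n. signature rk M k)"
  using sum.group[OF assms(1) finite_atLeastAtMost assms(2), of "\<lambda>_. 1::nat"]
  by (simp add: signature_def)

lemma representatives_Un: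
  assumes "J \<subseteq> I" "inj_on f J" "\<forall>i\<in>J. f i \<in> A i"
    and "inj_on g (I - J)" "\<forall>i\<in>I - J. g i \<in> A i - f ` J"
  shows "\<exists>h. inj_on h I \<and> (\<forall>i\<in>I. h i \<in> A i)"
proof (intro exI conjI)
  have apart: "f i \<noteq> g j" if "i \<in> J" "j \<in> I - J" for i j
  proof -
    have "g j \<notin> f ` J" using assms(5) that(2) by blast
    then show ?thesis using that(1) by (metis imageI)
  qed
  show "inj_on (\<lambda>i. if i \<in> J then f i else g i) I"
  proof (rule inj_onI)
    fix i j assume "i \<in> I" "j \<in> I"
      and "(if i \<in> J then f i else g i) = (if j \<in> J then f j else g j)"
    then show "i = j"
      using assms(2,4) apart[of i j] apart[of j i] by (cases "i \<in> J"; cases "j \<in> J") (auto dest: inj_onD)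
  qed
  show "\<forall>i\<in>I. (if i \<in> J then f i else g i) \<in> A i" using assms(3,5) by auto
qed

definition hall_condition :: "'i set \<Rightarrow> ('i \<Rightarrow> 'b set) \<Rightarrow> bool" where
  "hall_condition I A \<longleftrightarrow> (\<forall>J\<subseteq>I. card J \<le> card (\<Union>(A ` J)))"

lemma hall_condition_subset: "hall_condition I A \<Longrightarrow> K \<subseteq> I \<Longrightarrow> hall_condition K A"
  unfolding hall_condition_def by blast

lemma hall_condition_Diff_critical:
  assumes "finite I" "\<forall>i\<in>I. finite (A i)" "hall_condition I A"
    and "J \<subseteq> I" "card (\<Union>(A ` J)) = card J"
  shows "hall_condition (I - J) (\<lambda>i. A i - \<Union>(A ` J))"
  unfolding hall_condition_def
proof (intro allI impI)
  fix K assume K: "K \<subseteq> I - J"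
  have KJ: "K \<union> J \<subseteq> I" using K assms(4) by blast
  have fin: "finite (\<Union>(A ` (K \<union> J)))" using KJ assms(1,2) by (meson finite_UN_I finite_subset subsetD)
  have "card K + card J = card (K \<union> J)"
    using K assms(1,4) by (subst card_Un_disjoint) (auto intro: finite_subset)
  also have "\<dots> \<le> card (\<Union>(A ` (K \<union> J)))"
    using assms(3) KJ unfolding hall_condition_def by blast
  also have "\<dots> = card (\<Union>(A ` (K \<union> J)) - \<Union>(A ` J)) + card J"
  proof -
    have sub: "\<Union>(A ` J) \<subseteq> \<Union>(A ` (K \<union> J))" by blast
    have "card (\<Union>(A ` (K \<union> J)) - \<Union>(A ` J)) = card (\<Union>(A ` (K \<union> J))) - card (\<Union>(A ` J))"
      using fin sub by (meson card_Diff_subset finite_subset)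
    then show ?thesis using card_mono[OF fin sub] assms(5) by linarith
  qed
  also have "\<Union>(A ` (K \<union> J)) - \<Union>(A ` J) = (\<Union>i\<in>K. A i - \<Union>(A ` J))" by blast
  finally show "card K \<le> card (\<Union>i\<in>K. A i - \<Union>(A ` J))" by simp
qed

lemma hall_condition_Diff_singleton:
  assumes strict: "\<And>J. J \<subseteq> I \<Longrightarrow> J \<noteq> {} \<Longrightarrow> J \<noteq> I \<Longrightarrow> card J < card (\<Union>(A ` J))"
    and "i \<in> I"
  shows "hall_condition (I - {i}) (\<lambda>j. A j - {a})"
  unfolding hall_condition_def
proof (intro allI impI)
  fix K assume K: "K \<subseteq> I - {i}"
  show "card K \<le> card (\<Union>j\<in>K. A j - {a})"
  proof (cases "K = {}")
    case False
    then have "card K < card (\<Union>(A ` K))" using strict K \<open>i \<in> I\<close> by blast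
    moreover have "(\<Union>j\<in>K. A j - {a}) = \<Union>(A ` K) - {a}" by blast
    ultimately show ?thesis by (auto simp: card_Diff_singleton_if)
  qed simp
qed

text \<open>Halmos--Vaughan induction: if some proper nonempty J is critical, match J and then I - J
  with the sets shrunk by the neighbourhood of J; otherwise every such J has slack, so one may fix
  any representative a of a single index i and remove a from all other sets.\<close>

theorem hall_marriage:
  fixes A :: "'i \<Rightarrow> 'b set"
  assumes "finite I" "\<forall>i\<in>I. finite (A i)" "hall_condition I A"
  shows "\<exists>f. inj_on f I \<and> (\<forall>i\<in>I. f i \<in> A i)"
  using assms
proof (induction "card I" arbitrary: I A rule: less_induct)
  case less
  note fin = less.prems(1) and finA = less.prems(2) and hall = less.prems(3)
  show ?case
  proof (cases "\<exists>J. J \<subseteq> I \<and> J \<noteq> {} \<and> J \<noteq> I \<and> card (\<Union>(A ` J)) = card J")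
    case True
    then obtain J where J: "J \<subseteq> I" "J \<noteq> {}" "J \<noteq> I" "card (\<Union>(A ` J)) = card J" by blast
    have finJ: "finite J" using J(1) fin by (rule finite_subset)
    have "card J < card I" using J(1,3) fin by (meson psubsetI psubset_card_mono)
    then obtain f where f: "inj_on f J" "\<forall>i\<in>J. f i \<in> A i"
      using less.hyps[OF _ finJ _ hall_condition_subset[OF hall J(1)]] finA J(1) by blast
    have "0 < card J" using finJ J(2) by (simp add: card_gt_0_iff)
    then have "card (I - J) < card I"
      using J(1) finJ card_mono[OF fin J(1)] by (simp add: card_Diff_subset)
    moreover have "finite (I - J)" "\<forall>i\<in>I - J. finite (A i - \<Union>(A ` J))" using fin finA by auto
    ultimately obtain g where g: "inj_on g (I - J)" "\<forall>i\<in>I - J. g i \<in> A i - \<Union>(A ` J)"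
      using less.hyps[OF _ _ _ hall_condition_Diff_critical[OF fin finA hall J(1,4)]] by blast
    have "f ` J \<subseteq> \<Union>(A ` J)" using f(2) by blast
    then have "\<forall>i\<in>I - J. g i \<in> A i - f ` J" using g(2) by blast
    then show ?thesis by (rule representatives_Un[OF J(1) f g(1)])
  next
    case False
    then have strict: "\<And>J. J \<subseteq> I \<Longrightarrow> J \<noteq> {} \<Longrightarrow> J \<noteq> I \<Longrightarrow> card J < card (\<Union>(A ` J))"
      using hall unfolding hall_condition_def by (metis le_neq_implies_less)
    show ?thesis
    proof (cases "I = {}")
      case False
      then obtain i where i: "i \<in> I" by blast
      have "card {i} \<le> card (\<Union>(A ` {i}))" using hall i unfolding hall_condition_def by blast
      then obtain a where a: "a \<in> A i" by fastforce
      have "card (I - {i}) < card I" using fin i by (rule card_Diff1_less)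
      then obtain g where "inj_on g (I - {i})" "\<forall>j\<in>I - {i}. g j \<in> A j - (\<lambda>_. a) ` {i}"
        using less.hyps[OF _ _ _ hall_condition_Diff_singleton[OF strict i, of a]] fin finA by auto
      then show ?thesis using representatives_Un[of "{i}" I "\<lambda>_. a"] i a by auto
    qed simp
  qed
qed

lemma regular_bipartite_hall_condition:
  assumes "finite X" "finite Y" "EH \<subseteq> X \<times> Y" "0 < d"
    and deg_X: "\<forall>x\<in>X. card {y. (x,y) \<in> EH} = d"
    and deg_Y: "\<forall>y\<in>Y. card {x. (x,y) \<in> EH} = d"
  shows "hall_condition X (nbrs EH)"
  unfolding hall_condition_def
proof (intro allI impI)
  fix J assume J: "J \<subseteq> X"
  define N where "N = \<Union>(nbrs EH ` J)"
  have fin_nbrs: "finite (nbrs EH x)" for x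
    using assms(2,3) unfolding nbrs_def by (auto intro: finite_subset)
  have fin_rev: "finite {x. (x,y) \<in> EH}" for y
    using assms(1,3) by (auto intro: finite_subset)
  have "finite J" "N \<subseteq> Y" using J assms(1,3) unfolding N_def nbrs_def by (auto intro: finite_subset)
  then have fin_N: "finite N" using assms(2) by (rule_tac finite_subset)
  have "d * card J = (\<Sum>x\<in>J. card (nbrs EH x))"
    using deg_X J unfolding nbrs_def by (simp add: subset_iff)
  also have "\<dots> = card (SIGMA x:J. nbrs EH x)" using \<open>finite J\<close> fin_nbrs by simp
  also have "\<dots> \<le> card ((\<lambda>(y,x). (x,y)) ` (SIGMA y:N. {x. (x,y) \<in> EH}))"
    by (rule card_mono) (use fin_N fin_rev in simp, force simp: N_def nbrs_def image_iff)
  also have "\<dots> \<le> card (SIGMA y:N. {x. (x,y) \<in> EH})" by (rule card_image_le) (simp add: fin_N fin_rev)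
  also have "\<dots> = (\<Sum>y\<in>N. card {x. (x,y) \<in> EH})" using fin_N fin_rev by simp
  also have "\<dots> = d * card N" using deg_Y \<open>N \<subseteq> Y\<close> by (simp add: subset_iff)
  finally show "card J \<le> card (\<Union>(nbrs EH ` J))" using \<open>0 < d\<close> unfolding N_def by simp
qed

theorem regular_bipartite_perfect_matching:
  assumes "finite X" "finite Y" "card X = card Y" "EH \<subseteq> X \<times> Y" "0 < d"
    and "\<forall>x\<in>X. card {y. (x,y) \<in> EH} = d"
    and "\<forall>y\<in>Y. card {x. (x,y) \<in> EH} = d"
  shows "\<exists>M. perfect_matching X Y EH M"
proof -
  have "finite (nbrs EH x)" for x
    using assms(2,4) unfolding nbrs_def by (auto intro: finite_subset)
  then obtain f where f: "inj_on f X" "\<forall>x\<in>X. (x, f x) \<in> EH"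
    using hall_marriage[OF assms(1) _ regular_bipartite_hall_condition[OF assms(1,2,4-7)]]
    unfolding nbrs_def by auto
  have "f ` X = Y"
    using f assms(1-4) by (intro card_subset_eq) (auto simp: card_image)
  then have "perfect_matching X Y EH ((\<lambda>x. (x, f x)) ` X)"
    using f unfolding perfect_matching_def is_matching_def by (auto dest: inj_onD)
  then show ?thesis by blast
qed

lemma not_lex_greater_if_dominated:
  assumes "\<And>i. 1 \<le> i \<Longrightarrow> \<forall>j. 1 \<le> j \<and> j < i \<longrightarrow> s j = t j \<Longrightarrow> s i \<le> t i"
  shows "\<not> lex_greater s t"
proof
  assume "lex_greater s t"
  then obtain i where "1 \<le> i" "\<forall>j. 1 \<le> j \<and> j < i \<longrightarrow> s j = t j" "t i < s i"
    unfolding lex_greater_def by blast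
  with assms show False by (simp add: not_le[symmetric])
qed

lemma dominated_eq_if_not_lex_greater:
  assumes dom: "\<And>i. 1 \<le> i \<Longrightarrow> \<forall>j. 1 \<le> j \<and> j < i \<longrightarrow> s j = t j \<Longrightarrow> s i \<le> t i"
    and "\<not> lex_greater t s" and "1 \<le> k"
  shows "s k = t k"
proof (rule ccontr)
  let ?differ = "\<lambda>i. 1 \<le> i \<and> s i \<noteq> t i"
  assume "s k \<noteq> t k"
  then have "?differ k" using \<open>1 \<le> k\<close> by simp
  define i where "i = (LEAST i. ?differ i)"
  have i: "1 \<le> i" "s i \<noteq> t i" using LeastI[of ?differ, OF \<open>?differ k\<close>] unfolding i_def by auto
  have below: "\<forall>j. 1 \<le> j \<and> j < i \<longrightarrow> s j = t j" using not_less_Least[of _ ?differ] unfolding i_def by blast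
  have "s i < t i" using dom[OF i(1) below] i(2) by simp
  then have "lex_greater t s" using i(1) below unfolding lex_greater_def by auto
  with assms(2) show False by contradiction
qed

lemma G_edges_cases [consumes 1, case_names edge dummy_edge dummy_loop]:
  assumes "e \<in> G_edges n X EH"
  obtains (edge) x y where "e = (Inl x, Inl y)" "(x,y) \<in> EH"
    | (dummy_edge) x i where "e = (Inl x, Inr i)" "x \<in> X" "i \<in> {1..n - 3}"
    | (dummy_loop) i where "e = (Inr i, Inr i)" "i \<in> {1..n - 3}"
  using assms unfolding G_edges_def by auto

lemma Inl_Inl_mem_G_edges [simp]: "(Inl x, Inl y) \<in> G_edges n X EH \<longleftrightarrow> (x, y) \<in> EH"
  unfolding G_edges_def by blast

lemma embed_is_matching:
  assumes "is_matching EH M"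
  shows "is_matching (G_edges n X EH) (embed n M)"
  using assms unfolding is_matching_def embed_def G_edges_def by blast

lemma is_matching_Inl_restriction:
  fixes EH :: "('x \<times> 'y) set"
  assumes "is_matching (G_edges n X EH) M"
  shows "is_matching EH {(x, y). (Inl x, Inl y) \<in> M}"
  unfolding is_matching_def
proof (intro conjI allI impI)
  show "{(x, y). (Inl x, Inl y) \<in> M} \<subseteq> EH"
    using assms unfolding is_matching_def by auto
next
  fix a p p' assume "(a, p) \<in> {(x, y). (Inl x, Inl y) \<in> M} \<and> (a, p') \<in> {(x, y). (Inl x, Inl y) \<in> M}"
  then have "(Inl a, Inl p) \<in> M" "(Inl a, Inl p') \<in> M" by auto
  then have "Inl p = (Inl p' :: 'y + nat)" using assms unfolding is_matching_def by blast
  then show "p = p'" by simp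
next
  fix a a' p assume "(a, p) \<in> {(x, y). (Inl x, Inl y) \<in> M} \<and> (a', p) \<in> {(x, y). (Inl x, Inl y) \<in> M}"
  then have "(Inl a, Inl p) \<in> M" "(Inl a', Inl p) \<in> M" by auto
  then have "Inl a = (Inl a' :: 'x + nat)" using assms unfolding is_matching_def by blast
  then show "a = a'" by simp
qed

lemma inj_on_embed: "inj_on (embed n) S"
proof (rule inj_onI)
  fix M M' assume "embed n M = embed n M'"
  then have "(Inl x, Inl y) \<in> embed n M \<longleftrightarrow> (Inl x, Inl y) \<in> embed n M'" for x y by simp
  then show "M = M'" unfolding embed_def by auto
qed

locale rank_maximal_reduction =
  fixes X :: "'x set" and Y :: "'y set" and EH :: "('x \<times> 'y) set"
    and n :: nat and order :: "'y \<Rightarrow> nat" and dr :: "'x \<Rightarrow> nat \<Rightarrow> nat"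
  assumes finite_X: "finite X" and finite_Y: "finite Y"
    and card_X: "card X = n" and card_Y: "card Y = n"
    and EH_subset: "EH \<subseteq> X \<times> Y"
    and degree_X: "\<forall>x\<in>X. card {y. (x,y) \<in> EH} = 3"
    and degree_Y: "\<forall>y\<in>Y. card {x. (x,y) \<in> EH} = 3"
    and order_bij: "bij_betw order Y {1..n}"
    and dr_bij: "\<forall>x\<in>X. bij_betw (dr x) {1..n - 3} ({1..n} - order ` nbrs EH x)"
begin

abbreviation E :: "(('x + nat) \<times> ('y + nat)) set" where
  "E \<equiv> G_edges n X EH"

abbreviation rk :: "('x + nat) \<times> ('y + nat) \<Rightarrow> nat" where
  "rk \<equiv> G_rank order dr"

definition applicants :: "('x + nat) set" where
  "applicants = Inl ` X \<union> Inr ` {1..n - 3}"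

definition posts :: "('y + nat) set" where
  "posts = Inl ` Y \<union> Inr ` {1..n - 3}"

definition rank_one_posts :: "('y + nat) set" where
  "rank_one_posts = Inl ` {y \<in> Y. order y = 1} \<union> Inr ` {1..n - 3}"

definition optimal_signature :: "nat \<Rightarrow> nat" where
  "optimal_signature k = (if k = 1 then n - 3 + 1 else if k \<le> n then 1 else 0)"

lemma G_edges_subset: "E \<subseteq> applicants \<times> posts"
  using EH_subset unfolding applicants_def posts_def by (auto elim!: G_edges_cases)

lemma card_applicants: "card applicants = n + (n - 3)"
  using finite_X card_X unfolding applicants_def by (subst card_Un_disjoint) (auto simp: card_image)

lemma card_posts: "card posts = n + (n - 3)"
  using finite_Y card_Y unfolding posts_def by (subst card_Un_disjoint) (auto simp: card_image)

lemma finite_matching: "is_matching E M \<Longrightarrow> finite M"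
  using G_edges_subset finite_X finite_Y unfolding is_matching_def applicants_def posts_def
  by (meson finite_SigmaI finite_Un finite_atLeastAtMost finite_imageI finite_subset)

lemma rank_in_range:
  assumes "e \<in> E"
  shows "rk e \<in> {1..n}"
  using assms
proof (cases rule: G_edges_cases)
  case (edge x y)
  then show ?thesis using EH_subset bij_betw_apply[OF order_bij] by auto
next
  case (dummy_edge x i)
  then show ?thesis using bij_betw_apply[OF dr_bij[rule_format, of x]] by auto
qed auto

lemma card_order_fiber: "card {y \<in> Y. order y = k} \<le> 1"
proof -
  have "inj_on order {y \<in> Y. order y = k}"
    using order_bij inj_on_subset by (fastforce simp: bij_betw_def)
  then have "card {y \<in> Y. order y = k} = card (order ` {y \<in> Y. order y = k})"
    by (rule card_image[symmetric])
  also have "\<dots> \<le> card {k}" by (rule card_mono) auto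
  finally show ?thesis by simp
qed

lemma card_rank_one_posts: "card rank_one_posts \<le> n - 3 + 1"
proof -
  have "card (Inl ` {y \<in> Y. order y = 1} :: ('y + nat) set) \<le> 1"
    using card_order_fiber by (simp add: card_image)
  moreover have "card (Inr ` {1..n - 3} :: ('y + nat) set) = n - 3" by (simp add: card_image)
  ultimately show ?thesis
    unfolding rank_one_posts_def using card_Un_le[of "Inl ` {y \<in> Y. order y = 1}" "Inr ` {1..n - 3}"]
    by linarith
qed

lemma snd_rank_one_edges_subset:
  assumes "is_matching E M"
  shows "snd ` {e \<in> M. rk e = 1} \<subseteq> rank_one_posts"
proof
  fix p assume "p \<in> snd ` {e \<in> M. rk e = 1}"
  then obtain e where e: "e \<in> M" "rk e = 1" "p = snd e" by auto
  then have "e \<in> E" using assms by (auto simp: is_matching_def)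
  then show "p \<in> rank_one_posts"
    using e EH_subset unfolding rank_one_posts_def by (cases rule: G_edges_cases) auto
qed

lemma signature_one_le:
  assumes "is_matching E M"
  shows "signature rk M 1 \<le> n - 3 + 1"
proof -
  have "inj_on snd {e \<in> M. rk e = 1}"
    using matching_inj_on_snd[OF assms] by (rule inj_on_subset) auto
  then have "signature rk M 1 = card (snd ` {e \<in> M. rk e = 1})"
    unfolding signature_def by (simp add: card_image)
  also have "\<dots> \<le> card rank_one_posts"
    using snd_rank_one_edges_subset[OF assms] finite_Y by (intro card_mono) (auto simp: rank_one_posts_def)
  finally show ?thesis using card_rank_one_posts by simp
qed

lemma snd_rank_one_edges_eq:
  assumes M: "is_matching E M" and "signature rk M 1 = n - 3 + 1"
  shows "snd ` {e \<in> M. rk e = 1} = rank_one_posts"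
proof (rule card_seteq)
  show "finite rank_one_posts" using finite_Y by (simp add: rank_one_posts_def)
  show "snd ` {e \<in> M. rk e = 1} \<subseteq> rank_one_posts" by (rule snd_rank_one_edges_subset[OF M])
  have "inj_on snd {e \<in> M. rk e = 1}"
    using matching_inj_on_snd[OF M] by (rule inj_on_subset) auto
  then show "card rank_one_posts \<le> card (snd ` {e \<in> M. rk e = 1})"
    using assms(2) card_rank_one_posts unfolding signature_def by (simp add: card_image)
qed

lemma signature_le_one:
  assumes M: "is_matching E M" and sig_one: "signature rk M 1 = n - 3 + 1" and "2 \<le> k"
  shows "signature rk M k \<le> 1"
proof -
  have inj: "inj_on snd M" using matching_inj_on_snd[OF M] .
  note rank_one = snd_rank_one_edges_eq[OF M sig_one]
  \<comment> \<open>every dummy post is already taken by a rank-one edge, so rank-k edges end in real posts\<close>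
  have "snd ` {e \<in> M. rk e = k} \<subseteq> Inl ` {y \<in> Y. order y = k}"
  proof
    fix p assume "p \<in> snd ` {e \<in> M. rk e = k}"
    then obtain e where e: "e \<in> M" "rk e = k" "p = snd e" by auto
    then have "e \<in> E" using M by (auto simp: is_matching_def)
    then show "p \<in> Inl ` {y \<in> Y. order y = k}"
    proof (cases rule: G_edges_cases)
      case (dummy_edge x i)
      then have "Inr i \<in> rank_one_posts" unfolding rank_one_posts_def by auto
      then obtain e' where "e' \<in> M" "rk e' = 1" "snd e' = Inr i" using rank_one by force
      then have "e' = e" using inj_onD[OF inj, of e' e] e dummy_edge by auto
      then show ?thesis using e \<open>rk e' = 1\<close> \<open>2 \<le> k\<close> by simp
    qed (use e EH_subset \<open>2 \<le> k\<close> in auto)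
  qed
  then have "card (snd ` {e \<in> M. rk e = k}) \<le> card (Inl ` {y \<in> Y. order y = k} :: ('y + nat) set)"
    using finite_Y by (intro card_mono) auto
  also have "\<dots> \<le> 1" using card_order_fiber by (simp add: card_image)
  finally show ?thesis
    using inj_on_subset[OF inj] unfolding signature_def by (simp add: card_image)
qed

lemma signature_beyond_range:
  assumes "is_matching E M" "n < k"
  shows "signature rk M k = 0"
proof -
  have "rk e \<noteq> k" if "e \<in> M" for e
    using rank_in_range[of e] that assms unfolding is_matching_def by auto
  then have "{e \<in> M. rk e = k} = {}" by blast
  then show ?thesis unfolding signature_def by (simp only: card.empty)
qed

lemma signature_dominated:
  assumes "is_matching E M" "1 \<le> i"
    and "\<forall>j. 1 \<le> j \<and> j < i \<longrightarrow> signature rk M j = optimal_signature j"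
  shows "signature rk M i \<le> optimal_signature i"
proof (cases "i = 1")
  case True
  then show ?thesis using signature_one_le[OF assms(1)] by (simp add: optimal_signature_def)
next
  case False
  then have "signature rk M 1 = n - 3 + 1" using assms(2,3) by (simp add: optimal_signature_def)
  then show ?thesis
    using False assms(2) signature_le_one[OF assms(1)] signature_beyond_range[OF assms(1)]
    by (simp add: optimal_signature_def)
qed

lemma embed_has_edge_of_rank:
  assumes "perfect_matching X Y EH M" "k \<in> {1..n}"
  obtains x y where "(Inl x, Inl y) \<in> embed n M" "rk (Inl x, Inl y) = k"
proof -
  obtain y where "y \<in> Y" "order y = k" using assms(2) order_bij by (metis bij_betw_def imageE)
  moreover obtain x where "(x, y) \<in> M" using assms(1) \<open>y \<in> Y\<close> by (auto simp: perfect_matching_def)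
  ultimately show ?thesis using that unfolding embed_def by auto
qed

lemma signature_embed:
  assumes "0 < n" "perfect_matching X Y EH M" "1 \<le> k"
  shows "signature rk (embed n M) k = optimal_signature k"
proof -
  have M: "is_matching E (embed n M)"
    using assms(2) embed_is_matching unfolding perfect_matching_def by blast
  have finite: "finite {e \<in> embed n M. rk e = j}" for j using finite_matching[OF M] by simp
  obtain x y where xy: "(Inl x, Inl y) \<in> embed n M" "rk (Inl x, Inl y) = 1"
    using embed_has_edge_of_rank[OF assms(2), of 1] assms(1) by auto
  let ?rank_one = "insert (Inl x, Inl y) ((\<lambda>i. (Inr i, Inr i)) ` {1..n - 3})"
  have "?rank_one \<subseteq> {e \<in> embed n M. rk e = 1}"
    using xy unfolding embed_def by auto
  from card_mono[OF finite this] have "card ?rank_one \<le> signature rk (embed n M) 1"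
    unfolding signature_def .
  moreover have "card ?rank_one = n - 3 + 1"
    by (subst card_insert_disjoint) (auto simp: card_image inj_on_def)
  ultimately have "n - 3 + 1 \<le> signature rk (embed n M) 1" by simp
  then have sig_one: "signature rk (embed n M) 1 = n - 3 + 1"
    using signature_one_le[OF M] by simp
  show ?thesis
  proof (cases "k = 1 \<or> n < k")
    case True
    then show ?thesis using sig_one signature_beyond_range[OF M] by (auto simp: optimal_signature_def)
  next
    case False
    then obtain x y where "(Inl x, Inl y) \<in> embed n M" "rk (Inl x, Inl y) = k"
      using embed_has_edge_of_rank[OF assms(2), of k] assms(3) by auto
    then have "{e \<in> embed n M. rk e = k} \<noteq> {}" by blast
    then have "1 \<le> signature rk (embed n M) k"
      unfolding signature_def using finite[of k] by (simp add: card_gt_0_iff Suc_le_eq)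
    then show ?thesis
      using False assms(3) signature_le_one[OF M sig_one, of k] by (simp add: optimal_signature_def)
  qed
qed

lemma rank_maximal_embed:
  assumes "0 < n" "perfect_matching X Y EH M"
  shows "rank_maximal E rk (embed n M)"
  unfolding rank_maximal_def
proof (intro conjI notI)
  show "is_matching E (embed n M)"
    using assms(2) embed_is_matching unfolding perfect_matching_def by blast
next
  assume "\<exists>M'. is_matching E M' \<and> lex_greater (signature rk M') (signature rk (embed n M))"
  then obtain M' where M': "is_matching E M'"
    and greater: "lex_greater (signature rk M') (signature rk (embed n M))" by blast
  have "\<not> lex_greater (signature rk M') (signature rk (embed n M))"
    using signature_dominated[OF M'] signature_embed[OF assms]
    by (intro not_lex_greater_if_dominated) auto
  with greater show False by contradiction
qed

lemma rank_maximal_signature: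
  assumes "0 < n" "rank_maximal E rk M" "1 \<le> k"
  shows "signature rk M k = optimal_signature k"
proof -
  obtain M0 where M0: "perfect_matching X Y EH M0"
    using regular_bipartite_perfect_matching[OF finite_X finite_Y _ EH_subset _ degree_X degree_Y]
      card_X card_Y by auto
  have M: "is_matching E M" using assms(2) by (simp add: rank_maximal_def)
  have "\<not> lex_greater (signature rk (embed n M0)) (signature rk M)"
    using assms(2) rank_maximal_embed[OF assms(1) M0] unfolding rank_maximal_def by blast
  then have "signature rk M k = signature rk (embed n M0) k"
    using signature_dominated[OF M] signature_embed[OF assms(1) M0] assms(3)
    by (intro dominated_eq_if_not_lex_greater) auto
  then show ?thesis using signature_embed[OF assms(1) M0 assms(3)] by simp
qed

lemma sum_optimal_signature:
  assumes "0 < n"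
  shows "(\<Sum>k=1..n. optimal_signature k) = n + (n - 3)"
proof -
  have "(\<Sum>k=2..n. optimal_signature k) = (\<Sum>k=2..n. 1)"
    by (rule sum.cong) (auto simp: optimal_signature_def)
  then have "(\<Sum>k=1..n. optimal_signature k) = (n - 3 + 1) + (n - 1)"
    using assms by (simp add: sum.atLeast_Suc_atMost optimal_signature_def numeral_2_eq_2)
  then show ?thesis using assms by simp
qed

lemma card_rank_maximal:
  assumes "0 < n" "rank_maximal E rk M"
  shows "card M = n + (n - 3)"
proof -
  have M: "is_matching E M" using assms(2) by (simp add: rank_maximal_def)
  then have "rk ` M \<subseteq> {1..n}" using rank_in_range by (auto simp: is_matching_def)
  then have "card M = (\<Sum>k=1..n. signature rk M k)"
    by (rule card_eq_sum_signature[OF finite_matching[OF M]])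
  also have "\<dots> = (\<Sum>k=1..n. optimal_signature k)"
    using rank_maximal_signature[OF assms] by (intro sum.cong) auto
  finally show ?thesis using sum_optimal_signature[OF assms(1)] by simp
qed

lemma dummy_loop_in_covering_matching:
  assumes "is_matching E M" "fst ` M = applicants" "i \<in> {1..n - 3}"
  shows "(Inr i, Inr i) \<in> M"
proof -
  have "Inr i \<in> fst ` M" using assms(2,3) unfolding applicants_def by auto
  then obtain p where p: "(Inr i, p) \<in> M" by force
  then have "(Inr i, p) \<in> E" using assms(1) by (auto simp: is_matching_def)
  then have "p = Inr i" by (cases rule: G_edges_cases) auto
  with p show ?thesis by simp
qed

lemma dummy_edge_not_in_covering_matching:
  assumes "is_matching E M" "fst ` M = applicants"
  shows "(Inl x, Inr i) \<notin> M"
proof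
  assume e: "(Inl x, Inr i) \<in> M"
  then have "(Inl x, Inr i) \<in> E" using assms(1) by (auto simp: is_matching_def)
  then have "i \<in> {1..n - 3}" by (cases rule: G_edges_cases) auto
  then have "(Inr i, Inr i) \<in> M" by (rule dummy_loop_in_covering_matching[OF assms])
  with e assms(1) show False unfolding is_matching_def by blast
qed

lemma covering_matching_eq_embed:
  assumes "is_matching E M" "fst ` M = applicants"
  shows "M = embed n {(x, y). (Inl x, Inl y) \<in> M}"
proof
  show "M \<subseteq> embed n {(x, y). (Inl x, Inl y) \<in> M}"
  proof
    fix e assume "e \<in> M"
    then have "e \<in> E" using assms(1) by (auto simp: is_matching_def)
    then show "e \<in> embed n {(x, y). (Inl x, Inl y) \<in> M}"
      using \<open>e \<in> M\<close> dummy_edge_not_in_covering_matching[OF assms]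
      by (cases rule: G_edges_cases) (auto simp: embed_def)
  qed
  show "embed n {(x, y). (Inl x, Inl y) \<in> M} \<subseteq> M"
    using dummy_loop_in_covering_matching[OF assms] unfolding embed_def by auto
qed

lemma covering_matching_Inl_restriction_perfect:
  assumes M: "is_matching E M" and fst_M: "fst ` M = applicants" and snd_M: "snd ` M = posts"
  shows "perfect_matching X Y EH {(x, y). (Inl x, Inl y) \<in> M}"
  unfolding perfect_matching_def
proof (intro conjI ballI)
  show "is_matching EH {(x, y). (Inl x, Inl y) \<in> M}" by (rule is_matching_Inl_restriction[OF M])
next
  fix x assume "x \<in> X"
  then have "Inl x \<in> fst ` M" using fst_M unfolding applicants_def by simp
  then obtain p where "(Inl x, p) \<in> M" by force
  then show "\<exists>y. (x, y) \<in> {(x, y). (Inl x, Inl y) \<in> M}"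
    using dummy_edge_not_in_covering_matching[OF M fst_M] by (cases p) auto
next
  fix y assume "y \<in> Y"
  then have "Inl y \<in> snd ` M" using snd_M unfolding posts_def by simp
  then obtain a where a: "(a, Inl y) \<in> M" by force
  then have "(a, Inl y) \<in> E" using M by (auto simp: is_matching_def)
  then obtain x where "a = Inl x" by (cases rule: G_edges_cases) auto
  with a show "\<exists>x. (x, y) \<in> {(x, y). (Inl x, Inl y) \<in> M}" by auto
qed

lemma maximum_matching_is_embed:
  assumes M: "is_matching E M" and card_M: "card M = n + (n - 3)"
  shows "\<exists>M'. perfect_matching X Y EH M' \<and> M = embed n M'"
proof -
  have M_sub: "M \<subseteq> applicants \<times> posts" using M G_edges_subset by (auto simp: is_matching_def)
  have "fst ` M = applicants"
    using matching_covers_fst[OF M M_sub] card_M card_applicants finite_X by (simp add: applicants_def)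
  moreover have "snd ` M = posts"
    using matching_covers_snd[OF M M_sub] card_M card_posts finite_Y by (simp add: posts_def)
  ultimately show ?thesis
    using covering_matching_eq_embed[OF M] covering_matching_Inl_restriction_perfect[OF M] by blast
qed

text \<open>For n = 0 the empty matching is the only one, and it does not have the signature
  optimal_signature (there is no post of order 1).\<close>

lemma bij_betw_embed_empty:
  assumes "n = 0"
  shows "bij_betw (embed n) {M. perfect_matching X Y EH M} {M. rank_maximal E rk M}"
proof -
  have "X = {}" "Y = {}" using assms finite_X finite_Y card_X card_Y by auto
  then have "EH = {}" "E = {}" using EH_subset assms by (auto simp: G_edges_def)
  then have "{M. perfect_matching X Y EH M} = {{}}" "{M. rank_maximal E rk M} = {{}}"
    using \<open>X = {}\<close> \<open>Y = {}\<close>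
    by (auto simp: perfect_matching_def rank_maximal_def is_matching_def lex_greater_def)
  moreover have "embed n {} = {}" using assms by (simp add: embed_def)
  ultimately show ?thesis by (simp add: bij_betw_def)
qed

lemma bij_betw_embed:
  assumes "0 < n"
  shows "bij_betw (embed n) {M. perfect_matching X Y EH M} {M. rank_maximal E rk M}"
  unfolding bij_betw_def
proof
  show "inj_on (embed n) {M. perfect_matching X Y EH M}" by (rule inj_on_embed)
  have "M \<in> embed n ` {M. perfect_matching X Y EH M}" if "rank_maximal E rk M" for M
    using maximum_matching_is_embed card_rank_maximal[OF assms that] that
    by (auto simp: rank_maximal_def)
  then show "embed n ` {M. perfect_matching X Y EH M} = {M. rank_maximal E rk M}"
    using rank_maximal_embed[OF assms] by auto
qed

end

theorem lemma5:
  fixes X :: "'x set" and Y :: "'y set" and EH :: "('x \<times> 'y) set"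
    and n :: nat and order :: "'y \<Rightarrow> nat" and dr :: "'x \<Rightarrow> nat \<Rightarrow> nat"
  assumes "finite X" and "finite Y"
    and "card X = n" and "card Y = n"
    and "EH \<subseteq> X \<times> Y"
    and "\<forall>x\<in>X. card {y. (x,y) \<in> EH} = 3"
    and "\<forall>y\<in>Y. card {x. (x,y) \<in> EH} = 3"
    and "bij_betw order Y {1..n}"
    and "\<forall>x\<in>X. bij_betw (dr x) {1..n - 3} ({1..n} - order ` nbrs EH x)"
  shows "bij_betw (embed n) {M. perfect_matching X Y EH M}
           {M. rank_maximal (G_edges n X EH) (G_rank order dr) M}"
proof -
  interpret rank_maximal_reduction X Y EH n order dr
    using assms by unfold_locales
  show ?thesis using bij_betw_embed bij_betw_embed_empty by (cases "n = 0") auto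
qed

end
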